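(* Consider the Hawkes point process with exponentially decaying intensity: points $0\le T_1\le T_2\le\cdots$ with counting process $N(t)=\sum_{i\ge1}\mathbf{1}_{\{0\le T_i<t\}}$ (so $N(0)=0$) and stochastic intensity $$\lambda(t)=\lambda(0)e^{-\beta t}+\sum_{i\ge1}Y_i e^{-\beta(t-T_i)}\mathbf{1}_{\{0\le T_i<t\}},$$ where $Y_i=\beta Z_i$ with $Z_1,Z_2,\dots$ i.i.d. nonnegative with distribution $G$, independent of the points. Fix $\beta>0$ and $G$ with $\rho_1=\int_0^\infty z\,dG(z)$ satisfying $0\le\rho_1<1$, and let $\alpha=\beta(1-\rho_1)$. For $\gamma\in(0,1)$ let $T_\gamma=\inf\{t>0:N(t)\ge\gamma N(+\infty)\}$. Let $n$ be a scaling parameter, take initial intensity $\lambda(0)=\alpha n$ and $\gamma=1-1/n$. Then, as $n\to\infty$, $$\mathbb{E}[T_{1-1/n}\mid\lambda(0)=\alpha n]\le\frac{1}{\alpha}\big(\log(n)+1+o(1)\big).$$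
   Context: $N(+\infty)=\lim_{t\to\infty}N(t)$ is the total number of points. Conditioning on $\lambda(0)=\alpha n$ means the process is started with initial intensity $\alpha n$ and no points. *)

theory Defs
  imports "HOL-Probability.Probability"
begin

text \<open>Hawkes process with exponential kernel, built pathwise by the random time change
  construction: given i.i.d. Exp(1) variables e 0, e 1, ... and marks z 0, z 1, ...,
  the (k+1)-th point is the first time after the k-th point at which the compensator
  (the integral of the intensity) has increased by e k.  If this never happens,
  the process has no further points.\<close>

text \<open>Intensity at time u, given the list ps of already constructed points
  (the i-th point, 0-indexed, carries jump size Y = beta * z i).\<close>
definition hawkes_lambda ::
  "real \<Rightarrow> real \<Rightarrow> (nat \<Rightarrow> real) \<Rightarrow> real list \<Rightarrow> real \<Rightarrow> real" where
  "hawkes_lambda \<beta> l0 z ps u =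
     l0 * exp (- \<beta> * u)
     + (\<Sum>i<length ps. if 0 \<le> ps ! i \<and> ps ! i < u
                        then \<beta> * z i * exp (- \<beta> * (u - ps ! i)) else 0)"

definition hawkes_next_set ::
  "real \<Rightarrow> real \<Rightarrow> (nat \<Rightarrow> real) \<Rightarrow> real list \<Rightarrow> real \<Rightarrow> real set" where
  "hawkes_next_set \<beta> l0 z ps x =
     (let a = (if ps = [] then 0 else last ps)
      in {t. a \<le> t \<and> x \<le> integral {a..t} (hawkes_lambda \<beta> l0 z ps)})"

fun hawkes_pts ::
  "real \<Rightarrow> real \<Rightarrow> (nat \<Rightarrow> real) \<Rightarrow> (nat \<Rightarrow> real) \<Rightarrow> nat \<Rightarrow> real list" where
  "hawkes_pts \<beta> l0 e z 0 = []"
| "hawkes_pts \<beta> l0 e z (Suc k) =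
     (let ps = hawkes_pts \<beta> l0 e z k; S = hawkes_next_set \<beta> l0 z ps (e k)
      in if length ps = k \<and> S \<noteq> {} then ps @ [Inf S] else ps)"

text \<open>T_(i+1) (0-indexed as i); \<infinity> if there is no (i+1)-th point.\<close>
definition hawkes_T ::
  "real \<Rightarrow> real \<Rightarrow> (nat \<Rightarrow> real) \<Rightarrow> (nat \<Rightarrow> real) \<Rightarrow> nat \<Rightarrow> ereal" where
  "hawkes_T \<beta> l0 e z i =
     (let ps = hawkes_pts \<beta> l0 e z (Suc i)
      in if length ps = Suc i then ereal (ps ! i) else \<infinity>)"

definition hawkes_N ::
  "real \<Rightarrow> real \<Rightarrow> (nat \<Rightarrow> real) \<Rightarrow> (nat \<Rightarrow> real) \<Rightarrow> real \<Rightarrow> nat" where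
  "hawkes_N \<beta> l0 e z t = card {i. 0 \<le> hawkes_T \<beta> l0 e z i \<and> hawkes_T \<beta> l0 e z i < ereal t}"

definition hawkes_Ninf ::
  "real \<Rightarrow> real \<Rightarrow> (nat \<Rightarrow> real) \<Rightarrow> (nat \<Rightarrow> real) \<Rightarrow> nat" where
  "hawkes_Ninf \<beta> l0 e z = card {i. 0 \<le> hawkes_T \<beta> l0 e z i \<and> hawkes_T \<beta> l0 e z i < \<infinity>}"

text \<open>T_gamma = inf {t > 0. N(t) \<ge> gamma N(+\<infinity>)}, valued in [0,\<infinity>] (inf of empty set = \<infinity>).\<close>
definition hawkes_Tgamma ::
  "real \<Rightarrow> real \<Rightarrow> real \<Rightarrow> (nat \<Rightarrow> real) \<Rightarrow> (nat \<Rightarrow> real) \<Rightarrow> ennreal" where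
  "hawkes_Tgamma \<beta> l0 \<gamma> e z =
     Inf {ennreal t | t. 0 < t \<and>
            real (hawkes_N \<beta> l0 e z t) \<ge> \<gamma> * real (hawkes_Ninf \<beta> l0 e z)}"

end

theory Submission
  imports Defs
begin

text \<open>
  Between points the intensity decays exponentially, so the process is a Markov chain of pairs
  (t, y): the last point t and the rescaled intensity y = \<lambda>(t+)/\<beta>. The next Exp(1) variable e
  produces a further point iff e < y, at time t + ln (y / (y - e)) / \<beta>, after which y becomes
  y - e + Z. For \<gamma> \<le> 1, T_\<gamma> is at most the time of the last point, the limit of the times
  t_k of the chain.

  Let \<psi> s = s for s \<le> 1 and \<psi> s = 1 + ln s beyond (lin_log), and \<phi> y = \<psi> (y / (1 - \<rho>1)) / \<alpha>
  (hawkes_potential). Then t + \<phi> y decreases in expectation along the chain: averaging over the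
  mark Z uses the concavity of \<psi> and the mean \<rho>1, and averaging over e reduces to an explicit
  integral inequality whose core is (1 - exp (- w)) / w \<le> min 1 (1 / w). Hence
  E t_k \<le> \<phi> (\<lambda>(0) / \<beta>), which for \<lambda>(0) = \<alpha> n is \<psi> n / \<alpha> = (ln n + 1) / \<alpha>, and monotone
  convergence gives the bound with o(1) = 0.
\<close>

section \<open>Chains driven by independent inputs\<close>

lemma (in product_sigma_finite) product_nn_integral_insert2:
  assumes "finite I" "i \<notin> I" "j \<notin> insert i I"
    and f: "f \<in> borel_measurable (PiM (insert j (insert i I)) M)"
  shows "integral\<^sup>N (PiM (insert j (insert i I)) M) f
           = (\<integral>\<^sup>+x. \<integral>\<^sup>+y. \<integral>\<^sup>+z. f (x(i := y, j := z)) \<partial>M j \<partial>M i \<partial>PiM I M)"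
proof -
  have "integral\<^sup>N (PiM (insert j (insert i I)) M) f
      = (\<integral>\<^sup>+x. \<integral>\<^sup>+z. f (x(j := z)) \<partial>M j \<partial>PiM (insert i I) M)"
    using assms by (intro product_nn_integral_insert) auto
  also have "\<dots> = (\<integral>\<^sup>+x. \<integral>\<^sup>+y. \<integral>\<^sup>+z. f (x(i := y, j := z)) \<partial>M j \<partial>M i \<partial>PiM I M)"
  proof (rule product_nn_integral_insert)
    have "(\<lambda>(x, z). f (x(j := z))) \<in> borel_measurable (PiM (insert i I) M \<Otimes>\<^sub>M M j)"
      using measurable_comp[OF measurable_add_dim[of j "insert i I" M] f]
      by (simp add: o_def case_prod_beta')
    then show "(\<lambda>x. \<integral>\<^sup>+z. f (x(j := z)) \<partial>M j) \<in> borel_measurable (PiM (insert i I) M)"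
      by (rule M.borel_measurable_nn_integral)
  qed (use assms in auto)
  finally show ?thesis .
qed

fun driven_chain :: "('s \<Rightarrow> real \<Rightarrow> real \<Rightarrow> 's) \<Rightarrow> 's \<Rightarrow> (nat \<Rightarrow> real) \<Rightarrow> (nat \<Rightarrow> real) \<Rightarrow> nat \<Rightarrow> 's" where
  "driven_chain f s e z 0 = s"
| "driven_chain f s e z (Suc k) = f (driven_chain f s e z k) (e k) (z k)"

lemma driven_chain_cong:
  "(\<And>j. j < k \<Longrightarrow> e j = e' j) \<Longrightarrow> (\<And>j. j < k \<Longrightarrow> z j = z' j) \<Longrightarrow>
    driven_chain f s e z k = driven_chain f s e' z' k"
  by (induction k) auto

lemma measurable_driven_chain:
  assumes f: "(\<lambda>(s, e, z). f s e z) \<in> S \<Otimes>\<^sub>M borel \<Otimes>\<^sub>M borel \<rightarrow>\<^sub>M S" and s: "s \<in> space S"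
    and e: "\<And>j. j < k \<Longrightarrow> (\<lambda>\<omega>. e \<omega> j) \<in> borel_measurable N"
    and z: "\<And>j. j < k \<Longrightarrow> (\<lambda>\<omega>. z \<omega> j) \<in> borel_measurable N"
  shows "(\<lambda>\<omega>. driven_chain f s (e \<omega>) (z \<omega>) k) \<in> N \<rightarrow>\<^sub>M S"
  using e z
proof (induction k)
  case 0
  show ?case using s by simp
next
  case (Suc k)
  have "(\<lambda>\<omega>. (driven_chain f s (e \<omega>) (z \<omega>) k, e \<omega> k, z \<omega> k)) \<in> N \<rightarrow>\<^sub>M S \<Otimes>\<^sub>M borel \<Otimes>\<^sub>M borel"
    using Suc by (intro measurable_Pair) auto
  from measurable_compose[OF this f] show ?case by simp
qed

lemma measurable_driven_chain_PiM:
  assumes f: "(\<lambda>(s, e, z). f s e z) \<in> S \<Otimes>\<^sub>M borel \<Otimes>\<^sub>M borel \<rightarrow>\<^sub>M S" and s: "s \<in> space S"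
    and D: "\<And>i. sets (D i) = sets borel" and "k \<le> m"
  shows "(\<lambda>x. driven_chain f s (\<lambda>i. x (Inl i)) (\<lambda>i. x (Inr i)) k) \<in> PiM ({..<m} <+> {..<m}) D \<rightarrow>\<^sub>M S"
proof (rule measurable_driven_chain[OF f s])
  have component: "(\<lambda>x. x i) \<in> borel_measurable (PiM ({..<m} <+> {..<m}) D)"
    if "i \<in> {..<m} <+> {..<m}" for i
    using measurable_component_singleton[OF that, of D] by (simp add: measurable_cong_sets[OF refl D])
  fix j assume "j < k"
  with \<open>k \<le> m\<close> show "(\<lambda>x. x (Inl j)) \<in> borel_measurable (PiM ({..<m} <+> {..<m}) D)"
    and "(\<lambda>x. x (Inr j)) \<in> borel_measurable (PiM ({..<m} <+> {..<m}) D)"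
    by (auto intro: component)
qed

lemma nn_integral_PiM_driven_chain_le:
  fixes D :: "nat + nat \<Rightarrow> real measure" and W :: "'s \<Rightarrow> ennreal"
  assumes D: "\<And>i. prob_space (D i)" "\<And>i. sets (D i) = sets borel"
    and f: "(\<lambda>(s, e, z). f s e z) \<in> S \<Otimes>\<^sub>M borel \<Otimes>\<^sub>M borel \<rightarrow>\<^sub>M S" and s: "s \<in> space S"
    and W: "W \<in> borel_measurable S"
    and drift: "\<And>k s. s \<in> space S \<Longrightarrow> (\<integral>\<^sup>+e. \<integral>\<^sup>+z. W (f s e z) \<partial>D (Inr k) \<partial>D (Inl k)) \<le> W s"
  shows "(\<integral>\<^sup>+x. W (driven_chain f s (\<lambda>i. x (Inl i)) (\<lambda>i. x (Inr i)) m) \<partial>PiM ({..<m} <+> {..<m}) D) \<le> W s"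
proof (induction m)
  case 0
  have "{..<0} <+> {..<0} = ({} :: (nat + nat) set)" by auto
  then show ?case by (simp only:) (simp add: PiM_empty nn_integral_count_space_finite)
next
  case (Suc m)
  interpret product_sigma_finite D
    using D(1) by (simp add: product_sigma_finite_def prob_space_imp_sigma_finite)
  define C where "C k x = driven_chain f s (\<lambda>i. x (Inl i)) (\<lambda>i. x (Inr i)) k" for k x
  let ?I = "{..<m} <+> {..<m}"
  have I_Suc: "{..<Suc m} <+> {..<Suc m} = insert (Inr m) (insert (Inl m) ?I)" by auto
  have C_meas: "C k \<in> PiM ({..<n} <+> {..<n}) D \<rightarrow>\<^sub>M S" if "k \<le> n" for k n
    unfolding C_def[abs_def] using f s D(2) that by (rule measurable_driven_chain_PiM)
  have "(\<integral>\<^sup>+x. W (C (Suc m) x) \<partial>PiM ({..<Suc m} <+> {..<Suc m}) D)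
      = (\<integral>\<^sup>+x. \<integral>\<^sup>+e. \<integral>\<^sup>+z. W (C (Suc m) (x(Inl m := e, Inr m := z))) \<partial>D (Inr m) \<partial>D (Inl m) \<partial>PiM ?I D)"
    using measurable_compose[OF C_meas W, of "Suc m" "Suc m"]
    unfolding I_Suc by (intro product_nn_integral_insert2) auto
  also have "\<dots> \<le> (\<integral>\<^sup>+x. W (C m x) \<partial>PiM ?I D)"
  proof (intro nn_integral_mono)
    fix x assume x: "x \<in> space (PiM ?I D)"
    have "C (Suc m) (x(Inl m := e, Inr m := z)) = f (C m x) e z" for e z
      unfolding C_def by (simp, intro arg_cong[where f = "\<lambda>s. f s e z"] driven_chain_cong) auto
    then show "(\<integral>\<^sup>+e. \<integral>\<^sup>+z. W (C (Suc m) (x(Inl m := e, Inr m := z))) \<partial>D (Inr m) \<partial>D (Inl m))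
        \<le> W (C m x)"
      using drift measurable_space[OF C_meas x] by simp
  qed
  finally show ?case using Suc by (simp add: C_def)
qed

lemma (in prob_space) nn_integral_driven_chain_le:
  fixes X :: "nat + nat \<Rightarrow> 'a \<Rightarrow> real" and W :: "'s \<Rightarrow> ennreal"
  assumes indep: "indep_vars (\<lambda>_. borel) X UNIV"
    and f: "(\<lambda>(s, e, z). f s e z) \<in> S \<Otimes>\<^sub>M borel \<Otimes>\<^sub>M borel \<rightarrow>\<^sub>M S" and s: "s \<in> space S"
    and W: "W \<in> borel_measurable S"
    and drift: "\<And>k s. s \<in> space S \<Longrightarrow>
      (\<integral>\<^sup>+e. \<integral>\<^sup>+z. W (f s e z) \<partial>distr M borel (X (Inr k)) \<partial>distr M borel (X (Inl k))) \<le> W s"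
  shows "(\<integral>\<^sup>+\<omega>. W (driven_chain f s (\<lambda>k. X (Inl k) \<omega>) (\<lambda>k. X (Inr k) \<omega>) m) \<partial>M) \<le> W s"
proof (cases "m = 0")
  case True
  then show ?thesis by (simp add: emeasure_space_1)
next
  case False
  let ?I = "{..<m} <+> {..<m}"
  let ?X = "\<lambda>\<omega>. \<lambda>i\<in>?I. X i \<omega>"
  define g where "g x = W (driven_chain f s (\<lambda>i. x (Inl i)) (\<lambda>i. x (Inr i)) m)" for x
  have rv: "X i \<in> borel_measurable M" for i
    using indep unfolding indep_vars_def2 by auto
  have "(\<integral>\<^sup>+\<omega>. W (driven_chain f s (\<lambda>k. X (Inl k) \<omega>) (\<lambda>k. X (Inr k) \<omega>) m) \<partial>M) = (\<integral>\<^sup>+\<omega>. g (?X \<omega>) \<partial>M)"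
    unfolding g_def by (intro nn_integral_cong arg_cong[where f = W] driven_chain_cong) auto
  also have "\<dots> = (\<integral>\<^sup>+x. g x \<partial>distr M (PiM ?I (\<lambda>_. borel)) ?X)"
    using rv measurable_compose[OF measurable_driven_chain_PiM[OF f s] W]
    by (intro nn_integral_distr[symmetric] measurable_restrict) (auto simp: g_def)
  also have "\<dots> = (\<integral>\<^sup>+x. g x \<partial>PiM ?I (\<lambda>i. distr M borel (X i)))"
    using indep_vars_iff_distr_eq_PiM[where I = ?I and M' = "\<lambda>_. borel" and X = X] rv False
      indep_vars_subset[OF indep]
    by (auto simp: lessThan_empty_iff)
  also have "\<dots> \<le> W s"
    unfolding g_def using f s W drift rv
    by (intro nn_integral_PiM_driven_chain_le) (auto intro: prob_space_distr)
  finally show ?thesis .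
qed

section \<open>A Lyapunov function\<close>

lemma nn_integral_Ico_le_of_deriv:
  fixes f F :: "real \<Rightarrow> real"
  assumes f_borel [measurable]: "f \<in> borel_measurable borel"
    and deriv: "\<And>x. a \<le> x \<Longrightarrow> x < b \<Longrightarrow> (F has_real_derivative f x) (at x)"
    and nonneg: "\<And>x. a \<le> x \<Longrightarrow> x < b \<Longrightarrow> 0 \<le> f x"
    and bounded: "\<And>x. a \<le> x \<Longrightarrow> x < b \<Longrightarrow> F x \<le> C"
  shows "(\<integral>\<^sup>+x\<in>{a..<b}. ennreal (f x) \<partial>lborel) \<le> ennreal (C - F a)"
proof (cases "a < b")
  case False
  then show ?thesis by simp
next
  case True
  then obtain u :: "nat \<Rightarrow> real"
    where u: "incseq u" "\<And>i. a < u i" "\<And>i. u i < b" "(\<lambda>i. ereal (u i)) \<longlonglongrightarrow> ereal b"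
    using ereal_incseq_approx[of a b] by auto
  have "(\<integral>\<^sup>+x\<in>{a..<b}. ennreal (f x) \<partial>lborel)
      \<le> (\<integral>\<^sup>+x. (SUP i. ennreal (f x) * indicator {a..u i} x) \<partial>lborel)"
  proof (intro nn_integral_mono)
    fix x
    show "ennreal (f x) * indicator {a..<b} x \<le> (SUP i. ennreal (f x) * indicator {a..u i} x)"
    proof (cases "a \<le> x \<and> x < b")
      case True
      then obtain i where "x < u i"
        using order_tendstoD(1)[OF u(4), of "ereal x"] by (auto simp: eventually_sequentially)
      then show ?thesis using True by (intro SUP_upper2[of i]) auto
    qed simp
  qed
  also have "\<dots> = (SUP i. \<integral>\<^sup>+x\<in>{a..u i}. ennreal (f x) \<partial>lborel)"
    using u(1) by (intro nn_integral_monotone_convergence_SUP)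
      (auto simp: incseq_def le_fun_def split: split_indicator intro: order_trans)
  also have "\<dots> \<le> ennreal (C - F a)"
  proof (rule SUP_least)
    fix i
    have "(\<integral>\<^sup>+x\<in>{a..u i}. ennreal (f x) \<partial>lborel) = ennreal (F (u i) - F a)"
      using u(2,3)[of i] by (intro nn_integral_FTC_Icc) (auto intro!: deriv nonneg)
    also have "\<dots> \<le> ennreal (C - F a)"
      using u(2,3)[of i] by (intro ennreal_leI) (simp add: bounded)
    finally show "(\<integral>\<^sup>+x\<in>{a..u i}. ennreal (f x) \<partial>lborel) \<le> ennreal (C - F a)" .
  qed
  finally show ?thesis .
qed

definition lin_log :: "real \<Rightarrow> real" where
  "lin_log s = (if s \<le> 1 then s else ln s + 1)"

definition lin_log_deriv :: "real \<Rightarrow> real" where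
  "lin_log_deriv s = (if s \<le> 1 then 1 else 1 / s)"

lemma lin_log_measurable [measurable]: "lin_log \<in> borel_measurable borel"
  unfolding lin_log_def by measurable

lemma lin_log_deriv_measurable [measurable]: "lin_log_deriv \<in> borel_measurable borel"
  unfolding lin_log_deriv_def by measurable

lemma lin_log_nonneg: "0 \<le> s \<Longrightarrow> 0 \<le> lin_log s"
  unfolding lin_log_def by auto

lemma lin_log_deriv_pos: "0 < lin_log_deriv s"
  unfolding lin_log_deriv_def by auto

lemma lin_log_has_real_derivative: "(lin_log has_real_derivative lin_log_deriv s) (at s)"
proof -
  have "((\<lambda>x. if x \<in> {..1} then x else ln x + 1) has_vector_derivative
          (if s \<in> {..1} then 1 else 1 / s)) (at s within {..1} \<union> {1..})"
    by (rule has_vector_derivative_If_within_closures[where f' = "\<lambda>_. 1" and g' = "\<lambda>x. 1 / x"])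
       (auto intro!: derivative_eq_intros simp: has_real_derivative_iff_has_vector_derivative[symmetric])
  moreover have "{..1} \<union> {1..} = (UNIV :: real set)" by auto
  ultimately show ?thesis
    by (simp add: lin_log_def[abs_def] lin_log_deriv_def has_real_derivative_iff_has_vector_derivative)
qed

lemma lin_log_tangent_le:
  assumes "0 \<le> s" "0 \<le> t"
  shows "lin_log (s + t) \<le> lin_log s + lin_log_deriv s * t"
proof (cases "s \<le> 1")
  case True
  have "lin_log (s + t) \<le> s + t"
    using ln_le_minus_one[of "s + t"] assms by (auto simp: lin_log_def)
  then show ?thesis using True by (simp add: lin_log_def lin_log_deriv_def)
next
  case False
  then have "ln (s + t) = ln s + ln (1 + t / s)"
    using assms by (simp add: field_simps ln_div)
  also have "ln (1 + t / s) \<le> t / s"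
    using assms False by (intro ln_add_one_self_le_self) auto
  finally show ?thesis using False assms by (simp add: lin_log_def lin_log_deriv_def)
qed

lemma one_minus_exp_div_le_lin_log_deriv:
  assumes "0 < w" "0 < \<kappa>" "\<kappa> \<le> 1"
  shows "(1 - exp (- w)) / w \<le> lin_log_deriv (w / \<kappa>) / \<kappa>"
proof (cases "w / \<kappa> \<le> 1")
  case True
  have "1 - exp (- w) \<le> w" using exp_ge_add_one_self[of "- w"] by simp
  then have "(1 - exp (- w)) / w \<le> 1" using assms by simp
  also have "1 \<le> 1 / \<kappa>" using assms by simp
  finally show ?thesis using True by (simp add: lin_log_deriv_def)
next
  case False
  then show ?thesis using assms by (simp add: lin_log_deriv_def divide_right_mono)
qed

definition hawkes_potential :: "real \<Rightarrow> real \<Rightarrow> real \<Rightarrow> real" where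
  "hawkes_potential \<beta> \<rho> y = lin_log (y / (1 - \<rho>)) / (\<beta> * (1 - \<rho>))"

definition hawkes_potential_deriv :: "real \<Rightarrow> real \<Rightarrow> real \<Rightarrow> real" where
  "hawkes_potential_deriv \<beta> \<rho> y = lin_log_deriv (y / (1 - \<rho>)) / (\<beta> * (1 - \<rho>)\<^sup>2)"

lemma hawkes_potential_measurable [measurable]: "hawkes_potential \<beta> \<rho> \<in> borel_measurable borel"
  unfolding hawkes_potential_def[abs_def] by measurable

lemma hawkes_potential_deriv_measurable [measurable]:
  "hawkes_potential_deriv \<beta> \<rho> \<in> borel_measurable borel"
  unfolding hawkes_potential_deriv_def[abs_def] by measurable

text \<open>
  The intensity \<beta> y exp (- \<beta> (u - t)) after the last point t has total mass y, whence the
  formula for the next point; y = 0 encodes that no further points occur.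
\<close>
definition hawkes_step :: "real \<Rightarrow> real \<times> real \<Rightarrow> real \<Rightarrow> real \<Rightarrow> real \<times> real" where
  "hawkes_step \<beta> s e z =
     (case s of (t, y) \<Rightarrow> if e < y then (t + ln (y / (y - e)) / \<beta>, y - e + z) else (t, 0))"

definition hawkes_lyapunov :: "real \<Rightarrow> real \<Rightarrow> real \<times> real \<Rightarrow> ennreal" where
  "hawkes_lyapunov \<beta> \<rho> s = ennreal (fst s) + ennreal (hawkes_potential \<beta> \<rho> (snd s))"

lemma measurable_hawkes_step:
  "(\<lambda>(s, e, z). hawkes_step \<beta> s e z) \<in> (borel \<Otimes>\<^sub>M borel) \<Otimes>\<^sub>M borel \<Otimes>\<^sub>M borel \<rightarrow>\<^sub>M borel \<Otimes>\<^sub>M borel"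
  unfolding hawkes_step_def by measurable

lemma hawkes_lyapunov_measurable:
  "hawkes_lyapunov \<beta> \<rho> \<in> borel_measurable (borel \<Otimes>\<^sub>M borel)"
  unfolding hawkes_lyapunov_def[abs_def] by measurable

lemma hawkes_step_Pair:
  "hawkes_step \<beta> (t, y) e z = (if e < y then (t + ln (y / (y - e)) / \<beta>, y - e + z) else (t, 0))"
  by (simp add: hawkes_step_def)

context
  fixes \<beta> \<rho> :: real
  assumes \<beta>: "0 < \<beta>" and \<rho>: "0 \<le> \<rho>" "\<rho> < 1"
begin

lemma hawkes_potential_has_real_derivative:
  "(hawkes_potential \<beta> \<rho> has_real_derivative hawkes_potential_deriv \<beta> \<rho> y) (at y)"
proof -
  have "((\<lambda>y. lin_log (y / (1 - \<rho>))) has_real_derivative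
      lin_log_deriv (y / (1 - \<rho>)) * (1 / (1 - \<rho>))) (at y)"
    using \<rho> by (intro DERIV_chain2[OF lin_log_has_real_derivative]) (auto intro!: derivative_eq_intros)
  from DERIV_cdivide[OF this, of "\<beta> * (1 - \<rho>)"] show ?thesis
    by (simp add: hawkes_potential_def[abs_def] hawkes_potential_deriv_def power2_eq_square ac_simps)
qed

lemma hawkes_potential_nonneg: "0 \<le> y \<Longrightarrow> 0 \<le> hawkes_potential \<beta> \<rho> y"
  using \<beta> \<rho> by (simp add: hawkes_potential_def lin_log_nonneg)

lemma hawkes_potential_deriv_pos: "0 < hawkes_potential_deriv \<beta> \<rho> y"
  using \<beta> \<rho> lin_log_deriv_pos by (simp add: hawkes_potential_deriv_def)

lemma hawkes_potential_tangent_le: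
  assumes "0 \<le> w" "0 \<le> z"
  shows "hawkes_potential \<beta> \<rho> (w + z) \<le> hawkes_potential \<beta> \<rho> w + hawkes_potential_deriv \<beta> \<rho> w * z"
proof -
  have "lin_log (w / (1 - \<rho>) + z / (1 - \<rho>))
          \<le> lin_log (w / (1 - \<rho>)) + lin_log_deriv (w / (1 - \<rho>)) * (z / (1 - \<rho>))"
    using assms \<rho> by (intro lin_log_tangent_le) auto
  from divide_right_mono[OF this, of "\<beta> * (1 - \<rho>)"] show ?thesis
    using \<beta> \<rho> by (simp add: hawkes_potential_def hawkes_potential_deriv_def add_divide_distrib
        power2_eq_square ac_simps)
qed

lemma one_minus_exp_div_le_hawkes_potential_deriv:
  assumes "0 < w"
  shows "(1 - exp (- w)) / (\<beta> * w) \<le> (1 - \<rho>) * hawkes_potential_deriv \<beta> \<rho> w"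
proof -
  have "(1 - exp (- w)) / w \<le> lin_log_deriv (w / (1 - \<rho>)) / (1 - \<rho>)"
    using assms \<rho> by (intro one_minus_exp_div_le_lin_log_deriv) auto
  from divide_right_mono[OF this, of \<beta>] show ?thesis
    using \<beta> \<rho> by (simp add: hawkes_potential_deriv_def power2_eq_square ac_simps)
qed

lemma hawkes_potential_integrand_le:
  assumes "0 \<le> e" "e < y"
  shows "exp (- e) * (ln (y / (y - e)) / \<beta>
        + (hawkes_potential \<beta> \<rho> (y - e) + \<rho> * hawkes_potential_deriv \<beta> \<rho> (y - e)))
    \<le> (exp (- e) * (ln y - ln (y - e)) + (exp (- y) - exp (- e)) / (y - e)) / \<beta>
       + exp (- e) * (hawkes_potential \<beta> \<rho> (y - e) + hawkes_potential_deriv \<beta> \<rho> (y - e))"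
proof -
  let ?P = "hawkes_potential \<beta> \<rho>" and ?P' = "hawkes_potential_deriv \<beta> \<rho>"
  define w where "w = y - e"
  have w: "0 < w" using assms by (simp add: w_def)
  have "exp (- y) = exp (- e) * exp (- w)" by (simp add: w_def flip: exp_add)
  then have "(exp (- e) * (ln y - ln w) + (exp (- y) - exp (- e)) / w) / \<beta> + exp (- e) * (?P w + ?P' w)
      = exp (- e) * (ln (y / w) / \<beta> + ?P w + ?P' w - (1 - exp (- w)) / (\<beta> * w))"
    using w assms \<beta> by (simp add: ln_div field_simps)
  moreover have "\<rho> * ?P' w \<le> ?P' w - (1 - exp (- w)) / (\<beta> * w)"
    using one_minus_exp_div_le_hawkes_potential_deriv[OF w] by (simp add: algebra_simps)
  ultimately show ?thesis
    by (simp add: w_def[symmetric] mult_left_mono)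
qed

lemma nn_integral_Ico_hawkes_potential_integrand_le:
  "(\<integral>\<^sup>+e\<in>{0..<y}. ennreal (exp (- e) * (ln (y / (y - e)) / \<beta>
        + (hawkes_potential \<beta> \<rho> (y - e) + \<rho> * hawkes_potential_deriv \<beta> \<rho> (y - e)))) \<partial>lborel)
     \<le> ennreal (hawkes_potential \<beta> \<rho> y)"
proof -
  let ?P = "hawkes_potential \<beta> \<rho>" and ?P' = "hawkes_potential_deriv \<beta> \<rho>"
  txt \<open>
    The first term of R integrates exp (- e) ln (y / (y - e)) by parts, the constant exp (- y)
    keeping the boundary term bounded at e = y; the second is a primitive of
    exp (- e) (?P + ?P') (y - e).
  \<close>
  define R where "R e = (exp (- y) - exp (- e)) * (ln y - ln (y - e)) / \<beta> - exp (- e) * ?P (y - e)" for e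
  define h where "h e = (exp (- e) * (ln y - ln (y - e)) + (exp (- y) - exp (- e)) / (y - e)) / \<beta>
      + exp (- e) * (?P (y - e) + ?P' (y - e))" for e
  have integrand_le: "exp (- e) * (ln (y / (y - e)) / \<beta> + (?P (y - e) + \<rho> * ?P' (y - e))) \<le> h e"
    if "0 \<le> e" "e < y" for e
    unfolding h_def using that by (rule hawkes_potential_integrand_le)
  note [derivative_intros] = DERIV_chain'[OF _ hawkes_potential_has_real_derivative]
  have "(\<integral>\<^sup>+e\<in>{0..<y}.
          ennreal (exp (- e) * (ln (y / (y - e)) / \<beta> + (?P (y - e) + \<rho> * ?P' (y - e)))) \<partial>lborel)
      \<le> (\<integral>\<^sup>+e\<in>{0..<y}. ennreal (h e) \<partial>lborel)"
    by (intro nn_integral_mono) (auto intro: ennreal_leI integrand_le split: split_indicator)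
  also have "\<dots> \<le> ennreal (0 - R 0)"
  proof (rule nn_integral_Ico_le_of_deriv)
    show "h \<in> borel_measurable borel" unfolding h_def[abs_def] by measurable
    show "(R has_real_derivative h e) (at e)" if "0 \<le> e" "e < y" for e
    proof -
      have "(R has_real_derivative
          (exp (- e) * (ln y - ln (y - e)) + (exp (- y) - exp (- e)) / (y - e)) / \<beta>
          - (- (exp (- e) * ?P (y - e)) - ?P' (y - e) * exp (- e))) (at e)"
        unfolding R_def[abs_def] using that \<beta> by (auto intro!: derivative_eq_intros)
      then show ?thesis by (simp add: h_def algebra_simps)
    qed
    show "0 \<le> h e" if "0 \<le> e" "e < y" for e
      using that \<beta> \<rho> hawkes_potential_nonneg[of "y - e"] hawkes_potential_deriv_pos[of "y - e"]
      by (intro order.trans[OF _ integrand_le[OF that]]) (simp add: ln_ge_zero_iff field_simps)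
    show "R e \<le> 0" if "0 \<le> e" "e < y" for e
    proof -
      have "(exp (- y) - exp (- e)) * (ln y - ln (y - e)) \<le> 0"
        using that by (intro mult_nonpos_nonneg) auto
      then have "(exp (- y) - exp (- e)) * (ln y - ln (y - e)) / \<beta> \<le> 0"
        using \<beta> by (rule divide_nonpos_pos)
      moreover have "0 \<le> exp (- e) * ?P (y - e)"
        using that hawkes_potential_nonneg[of "y - e"] by simp
      ultimately show ?thesis by (simp add: R_def)
    qed
  qed
  also have "R 0 = - ?P y" by (simp add: R_def)
  finally show ?thesis by simp
qed

lemma nn_integral_exponential_hawkes_potential_le:
  "(\<integral>\<^sup>+e. (if e < y then ennreal (ln (y / (y - e)) / \<beta>)
              + ennreal (hawkes_potential \<beta> \<rho> (y - e) + \<rho> * hawkes_potential_deriv \<beta> \<rho> (y - e))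
            else 0) \<partial>density lborel (exponential_density 1))
     \<le> ennreal (hawkes_potential \<beta> \<rho> y)"
    (is "(\<integral>\<^sup>+e. ?X e \<partial>_) \<le> _")
proof -
  let ?P = "hawkes_potential \<beta> \<rho>" and ?P' = "hawkes_potential_deriv \<beta> \<rho>"
  have "(\<integral>\<^sup>+e. ?X e \<partial>density lborel (exponential_density 1))
      = (\<integral>\<^sup>+e. ennreal (exponential_density 1 e) * ?X e \<partial>lborel)"
    by (subst nn_integral_density) auto
  also have "\<dots> = (\<integral>\<^sup>+e\<in>{0..<y}. ennreal (exp (- e) * (ln (y / (y - e)) / \<beta>
        + (?P (y - e) + \<rho> * ?P' (y - e)))) \<partial>lborel)"
  proof (intro nn_integral_cong)
    fix e
    show "ennreal (exponential_density 1 e) * ?X e = ennreal (exp (- e) * (ln (y / (y - e)) / \<beta>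
        + (?P (y - e) + \<rho> * ?P' (y - e)))) * indicator {0..<y} e"
    proof (cases "0 \<le> e \<and> e < y")
      case True
      moreover have "0 \<le> ln (y / (y - e)) / \<beta>"
        using True \<beta> by (simp add: ln_ge_zero_iff field_simps)
      moreover have "0 \<le> ?P (y - e) + \<rho> * ?P' (y - e)"
        using True \<rho> hawkes_potential_nonneg[of "y - e"] hawkes_potential_deriv_pos[of "y - e"] by simp
      ultimately show ?thesis
        by (simp add: exponential_density_def ennreal_mult' flip: ennreal_plus)
    qed (auto simp: exponential_density_def)
  qed
  also have "\<dots> \<le> ennreal (?P y)"
    by (rule nn_integral_Ico_hawkes_potential_integrand_le)
  finally show ?thesis .
qed

lemma nn_integral_hawkes_step_mark_le:
  fixes G :: "real measure"
  assumes G: "prob_space G" "sets G = sets borel" "AE z in G. 0 \<le> z" "integrable G (\<lambda>z. z)"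
    and mean: "\<rho> = (\<integral>z. z \<partial>G)"
  shows "(\<integral>\<^sup>+z. hawkes_lyapunov \<beta> \<rho> (hawkes_step \<beta> (t, y) e z) \<partial>G)
    \<le> ennreal t + (if e < y then ennreal (ln (y / (y - e)) / \<beta>)
              + ennreal (hawkes_potential \<beta> \<rho> (y - e) + \<rho> * hawkes_potential_deriv \<beta> \<rho> (y - e)) else 0)"
proof (cases "e < y")
  case True
  interpret G: prob_space G by (rule G(1))
  let ?P = "hawkes_potential \<beta> \<rho>" and ?P' = "hawkes_potential_deriv \<beta> \<rho>"
  define w where "w = y - e"
  have "(\<integral>\<^sup>+z. hawkes_lyapunov \<beta> \<rho> (hawkes_step \<beta> (t, y) e z) \<partial>G)
      \<le> (\<integral>\<^sup>+z. ennreal t + ennreal (ln (y / w) / \<beta>) + ennreal (?P w + ?P' w * z) \<partial>G)"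
    using G(3)
  proof (intro nn_integral_mono_AE, eventually_elim)
    case (elim z)
    have "ennreal (t + ln (y / w) / \<beta>) \<le> ennreal t + ennreal (ln (y / w) / \<beta>)"
      by (simp add: ennreal_plus_if ennreal_leI)
    moreover have "?P (w + z) \<le> ?P w + ?P' w * z"
      using True elim by (intro hawkes_potential_tangent_le) (auto simp: w_def)
    ultimately show ?case
      using True by (auto simp: hawkes_step_Pair hawkes_lyapunov_def w_def add_mono ennreal_leI)
  qed
  also have "\<dots> = ennreal t + ennreal (ln (y / w) / \<beta>) + ennreal (\<integral>z. ?P w + ?P' w * z \<partial>G)"
  proof -
    have "(\<integral>\<^sup>+z. ennreal (?P w + ?P' w * z) \<partial>G) = ennreal (\<integral>z. ?P w + ?P' w * z \<partial>G)"
      using G(3,4) True hawkes_potential_nonneg[of w] hawkes_potential_deriv_pos[of w]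
      by (intro nn_integral_eq_integral) (auto simp: w_def elim!: eventually_mono)
    then show ?thesis
      by (subst nn_integral_add) (auto simp: G.emeasure_space_1 measurable_cong_sets[OF G(2) refl])
  qed
  also have "(\<integral>z. ?P w + ?P' w * z \<partial>G) = ?P w + \<rho> * ?P' w"
    using G(4) by (simp add: mean G.prob_space)
  finally show ?thesis using True by (simp add: w_def add.assoc)
next
  case False
  then have "hawkes_lyapunov \<beta> \<rho> (hawkes_step \<beta> (t, y) e z) = ennreal t" for z
    by (simp add: hawkes_step_Pair hawkes_lyapunov_def hawkes_potential_def lin_log_def)
  then show ?thesis using prob_space.emeasure_space_1[OF G(1)] by simp
qed

lemma nn_integral_hawkes_step_le:
  fixes G :: "real measure"
  assumes G: "prob_space G" "sets G = sets borel" "AE z in G. 0 \<le> z" "integrable G (\<lambda>z. z)"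
    and mean: "\<rho> = (\<integral>z. z \<partial>G)"
  shows "(\<integral>\<^sup>+e. \<integral>\<^sup>+z. hawkes_lyapunov \<beta> \<rho> (hawkes_step \<beta> s e z) \<partial>G
             \<partial>density lborel (exponential_density 1))
           \<le> hawkes_lyapunov \<beta> \<rho> s"
proof -
  interpret Exp: prob_space "density lborel (exponential_density 1)"
    by (rule prob_space_exponential_density) simp
  obtain t y where s: "s = (t, y)" by fastforce
  define X where "X e = (if e < y then ennreal (ln (y / (y - e)) / \<beta>)
      + ennreal (hawkes_potential \<beta> \<rho> (y - e) + \<rho> * hawkes_potential_deriv \<beta> \<rho> (y - e)) else 0)" for e
  have "(\<integral>\<^sup>+e. \<integral>\<^sup>+z. hawkes_lyapunov \<beta> \<rho> (hawkes_step \<beta> s e z) \<partial>G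
         \<partial>density lborel (exponential_density 1))
      \<le> (\<integral>\<^sup>+e. ennreal t + X e \<partial>density lborel (exponential_density 1))"
    unfolding s X_def by (intro nn_integral_mono nn_integral_hawkes_step_mark_le[OF G mean])
  also have "\<dots> = ennreal t + (\<integral>\<^sup>+e. X e \<partial>density lborel (exponential_density 1))"
  proof -
    have "X \<in> borel_measurable borel" unfolding X_def[abs_def] by measurable
    then show ?thesis using Exp.emeasure_space_1 by (subst nn_integral_add) auto
  qed
  also have "(\<integral>\<^sup>+e. X e \<partial>density lborel (exponential_density 1)) \<le> ennreal (hawkes_potential \<beta> \<rho> y)"
    unfolding X_def by (rule nn_integral_exponential_hawkes_potential_le)
  finally show ?thesis by (simp add: s hawkes_lyapunov_def add_left_mono)
qed

end

section \<open>The pathwise construction as a driven chain\<close>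

lemma integral_exp_decay:
  fixes f :: "real \<Rightarrow> real"
  assumes "a \<le> t" and f: "\<And>u. a < u \<Longrightarrow> f u = \<beta> * y * exp (- \<beta> * (u - a))"
  shows "integral {a..t} f = y * (1 - exp (- \<beta> * (t - a)))"
proof -
  have "integral {a..t} f = integral {a..t} (\<lambda>u. \<beta> * y * exp (- \<beta> * (u - a)))"
    using f by (intro integral_spike[of "{a}"]) auto
  also have "\<dots> = - y * exp (- \<beta> * (t - a)) - (- y * exp (- \<beta> * (a - a)))"
  proof (intro integral_unique fundamental_theorem_of_calculus[OF \<open>a \<le> t\<close>])
    fix x
    have "((\<lambda>u. - y * exp (- \<beta> * (u - a))) has_real_derivative \<beta> * y * exp (- \<beta> * (x - a))) (at x)"
      by (auto intro!: derivative_eq_intros)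
    then show "((\<lambda>u. - y * exp (- \<beta> * (u - a))) has_vector_derivative \<beta> * y * exp (- \<beta> * (x - a)))
        (at x within {a..t})"
      by (simp add: has_real_derivative_iff_has_vector_derivative has_vector_derivative_at_within)
  qed
  finally show ?thesis by (simp add: algebra_simps)
qed

lemma compensator_crossing_set_eq:
  fixes f :: "real \<Rightarrow> real"
  assumes f: "\<And>u. a < u \<Longrightarrow> f u = \<beta> * y * exp (- \<beta> * (u - a))"
    and "0 < \<beta>" "0 < y" "0 < x"
  shows "{t. a \<le> t \<and> x \<le> integral {a..t} f} = (if x < y then {a + ln (y / (y - x)) / \<beta>..} else {})"
proof -
  have crossing_iff: "x \<le> integral {a..t} f \<longleftrightarrow> x < y \<and> a + ln (y / (y - x)) / \<beta> \<le> t" if "a \<le> t" for t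
  proof -
    have "x \<le> integral {a..t} f \<longleftrightarrow> exp (- \<beta> * (t - a)) \<le> (y - x) / y"
      using that assms by (simp add: integral_exp_decay[OF that f] field_simps)
    also have "\<dots> \<longleftrightarrow> x < y \<and> - \<beta> * (t - a) \<le> ln ((y - x) / y)"
    proof (cases "x < y")
      case False
      then have "(y - x) / y \<le> 0" using assms by (simp add: divide_nonpos_pos)
      then show ?thesis using False exp_gt_zero[of "- \<beta> * (t - a)"] by linarith
    qed (use assms in \<open>simp add: ln_ge_iff\<close>)
    also have "ln ((y - x) / y) = - ln (y / (y - x))"
      using assms by (cases "x < y") (auto simp: ln_div)
    finally show ?thesis using assms by (auto simp: field_simps)
  qed
  have "0 \<le> ln (y / (y - x)) / \<beta>" if "x < y"
    using that assms by (simp add: ln_ge_zero_iff field_simps)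
  then show ?thesis by (auto simp: crossing_iff)
qed

lemma hawkes_lambda_append:
  "hawkes_lambda \<beta> l0 z (ps @ [t]) u = hawkes_lambda \<beta> l0 z ps u
     + (if 0 \<le> t \<and> t < u then \<beta> * z (length ps) * exp (- \<beta> * (u - t)) else 0)"
proof -
  have "(\<Sum>i<length ps. if 0 \<le> (ps @ [t]) ! i \<and> (ps @ [t]) ! i < u
                        then \<beta> * z i * exp (- \<beta> * (u - (ps @ [t]) ! i)) else 0)
      = (\<Sum>i<length ps. if 0 \<le> ps ! i \<and> ps ! i < u then \<beta> * z i * exp (- \<beta> * (u - ps ! i)) else 0)"
    by (rule sum.cong) (auto simp: nth_append)
  then show ?thesis unfolding hawkes_lambda_def by (simp add: nth_append)
qed

abbreviation hawkes_chain :: "real \<Rightarrow> real \<Rightarrow> (nat \<Rightarrow> real) \<Rightarrow> (nat \<Rightarrow> real) \<Rightarrow> nat \<Rightarrow> real \<times> real" where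
  "hawkes_chain \<beta> l0 \<equiv> driven_chain (hawkes_step \<beta>) (0, l0 / \<beta>)"

definition is_hawkes_state :: "real \<Rightarrow> real \<Rightarrow> (nat \<Rightarrow> real) \<Rightarrow> real list \<Rightarrow> real \<times> real \<Rightarrow> bool" where
  "is_hawkes_state \<beta> l0 z ps s \<longleftrightarrow>
     0 \<le> fst s \<and> 0 < snd s \<and> (if ps = [] then 0 else last ps) = fst s \<and>
     (\<forall>u > fst s. hawkes_lambda \<beta> l0 z ps u = \<beta> * snd s * exp (- \<beta> * (u - fst s)))"

lemma hawkes_next_set_eq:
  assumes "is_hawkes_state \<beta> l0 z ps (t, y)" "0 < \<beta>" "0 < x"
  shows "hawkes_next_set \<beta> l0 z ps x = (if x < y then {t + ln (y / (y - x)) / \<beta>..} else {})"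
  using assms compensator_crossing_set_eq[of t "hawkes_lambda \<beta> l0 z ps" \<beta> y x]
  unfolding hawkes_next_set_def is_hawkes_state_def Let_def by simp

lemma is_hawkes_state_append:
  assumes state: "is_hawkes_state \<beta> l0 z ps (t, y)" and "0 < \<beta>" "0 < x" "x < y" "0 \<le> z (length ps)"
  shows "is_hawkes_state \<beta> l0 z (ps @ [t + ln (y / (y - x)) / \<beta>])
           (hawkes_step \<beta> (t, y) x (z (length ps)))"
proof -
  define t' where "t' = t + ln (y / (y - x)) / \<beta>"
  have t': "t \<le> t'"
    using assms by (simp add: t'_def ln_ge_zero_iff field_simps)
  have exp_shift: "y * exp (- \<beta> * (u - t)) = (y - x) * exp (- \<beta> * (u - t'))" for u
  proof -
    have "exp (- \<beta> * (u - t')) = exp (- \<beta> * (u - t)) * exp (ln (y / (y - x)))"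
      using \<open>0 < \<beta>\<close> by (simp add: t'_def algebra_simps flip: exp_add)
    also have "\<dots> = exp (- \<beta> * (u - t)) * (y / (y - x))"
      using assms by simp
    finally show ?thesis using assms by (simp add: field_simps)
  qed
  have "hawkes_lambda \<beta> l0 z (ps @ [t']) u = \<beta> * (y - x + z (length ps)) * exp (- \<beta> * (u - t'))"
    if "t' < u" for u
  proof -
    have "hawkes_lambda \<beta> l0 z (ps @ [t']) u
        = \<beta> * (y * exp (- \<beta> * (u - t))) + \<beta> * z (length ps) * exp (- \<beta> * (u - t'))"
      using state t' that by (simp add: hawkes_lambda_append is_hawkes_state_def)
    also have "\<dots> = \<beta> * ((y - x) * exp (- \<beta> * (u - t'))) + \<beta> * z (length ps) * exp (- \<beta> * (u - t'))"
      by (simp only: exp_shift)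
    finally show ?thesis by (simp add: algebra_simps)
  qed
  then show ?thesis
    using state t' assms by (simp add: is_hawkes_state_def hawkes_step_Pair t'_def[symmetric])
qed

lemma hawkes_pts_hawkes_chain:
  assumes \<beta>: "0 < \<beta>" and l0: "0 < l0" and e: "\<And>k. 0 < e k" and z: "\<And>k. 0 \<le> z k"
  shows "if 0 < snd (hawkes_chain \<beta> l0 e z k)
         then length (hawkes_pts \<beta> l0 e z k) = k \<and>
              is_hawkes_state \<beta> l0 z (hawkes_pts \<beta> l0 e z k) (hawkes_chain \<beta> l0 e z k)
         else length (hawkes_pts \<beta> l0 e z k) < k"
proof (induction k)
  case 0
  show ?case using \<beta> l0 by (simp add: is_hawkes_state_def hawkes_lambda_def)
next
  case (Suc k)
  obtain t y where s: "hawkes_chain \<beta> l0 e z k = (t, y)" by fastforce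
  define ps where "ps = hawkes_pts \<beta> l0 e z k"
  have pts_Suc: "hawkes_pts \<beta> l0 e z (Suc k) = (if length ps = k \<and> hawkes_next_set \<beta> l0 z ps (e k) \<noteq> {}
      then ps @ [Inf (hawkes_next_set \<beta> l0 z ps (e k))] else ps)"
    by (simp add: ps_def Let_def)
  show ?case
  proof (cases "0 < y")
    case False
    then have "length ps < k" using Suc s by (simp add: ps_def)
    moreover have "\<not> e k < y" using False e[of k] by simp
    ultimately show ?thesis using s pts_Suc by (simp add: hawkes_step_Pair)
  next
    case True
    then have ps: "length ps = k" "is_hawkes_state \<beta> l0 z ps (t, y)"
      using Suc s by (simp_all add: ps_def)
    show ?thesis
    proof (cases "e k < y")
      case False
      then show ?thesis
        using s pts_Suc ps hawkes_next_set_eq[OF ps(2) \<beta> e] by (simp add: hawkes_step_Pair)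
    next
      case True
      then show ?thesis
        using s pts_Suc ps hawkes_next_set_eq[OF ps(2) \<beta> e]
          is_hawkes_state_append[OF ps(2) \<beta> e True] z[of k]
        by (simp add: hawkes_step_Pair)
    qed
  qed
qed

lemma hawkes_T_eq_hawkes_chain:
  assumes "0 < \<beta>" "0 < l0" "\<And>k. 0 < e k" "\<And>k. 0 \<le> z k"
  shows "hawkes_T \<beta> l0 e z i =
    (if 0 < snd (hawkes_chain \<beta> l0 e z (Suc i))
     then ereal (fst (hawkes_chain \<beta> l0 e z (Suc i))) else \<infinity>)"
proof -
  define ps where "ps = hawkes_pts \<beta> l0 e z (Suc i)"
  note inv = hawkes_pts_hawkes_chain[where e = e and z = z and k = "Suc i", OF assms, folded ps_def]
  show ?thesis
  proof (cases "0 < snd (hawkes_chain \<beta> l0 e z (Suc i))")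
    case True
    then have "length ps = Suc i" and state: "is_hawkes_state \<beta> l0 z ps (hawkes_chain \<beta> l0 e z (Suc i))"
      using inv by simp_all
    moreover from this(1) have "ps \<noteq> []" by auto
    ultimately have "ps ! i = fst (hawkes_chain \<beta> l0 e z (Suc i))"
      by (simp add: is_hawkes_state_def last_conv_nth)
    then show ?thesis using True \<open>length ps = Suc i\<close>
      unfolding hawkes_T_def Let_def ps_def[symmetric] by simp
  next
    case False
    then show ?thesis using inv unfolding hawkes_T_def Let_def ps_def[symmetric] by simp
  qed
qed

lemma incseq_hawkes_chain_time:
  assumes "0 < \<beta>" "\<And>k. 0 \<le> e k"
  shows "incseq (\<lambda>k. fst (hawkes_chain \<beta> l0 e z k))"
proof (rule incseq_SucI)
  fix k
  obtain t y where s: "hawkes_chain \<beta> l0 e z k = (t, y)" by fastforce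
  have "0 \<le> ln (y / (y - e k))" if "e k < y"
    using that assms(2)[of k] by (simp add: ln_ge_zero_iff field_simps)
  then show "fst (hawkes_chain \<beta> l0 e z k) \<le> fst (hawkes_chain \<beta> l0 e z (Suc k))"
    using assms(1) by (simp add: s hawkes_step_Pair)
qed

lemma hawkes_Tgamma_le:
  assumes "\<gamma> \<le> 1" "0 \<le> b" and T: "\<And>i. hawkes_T \<beta> l0 e z i < \<infinity> \<Longrightarrow> hawkes_T \<beta> l0 e z i \<le> ereal b"
  shows "hawkes_Tgamma \<beta> l0 \<gamma> e z \<le> ennreal b"
proof (rule ennreal_le_epsilon)
  fix \<epsilon> :: real assume "0 < \<epsilon>"
  let ?T = "hawkes_T \<beta> l0 e z"
  have "ereal b < ereal (b + \<epsilon>)" using \<open>0 < \<epsilon>\<close> by simp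
  then have "?T i < ereal (b + \<epsilon>) \<longleftrightarrow> ?T i < \<infinity>" for i
    using T[of i] by (cases "?T i < \<infinity>") (auto intro: order.strict_trans1)
  then have "{i. 0 \<le> ?T i \<and> ?T i < ereal (b + \<epsilon>)} = {i. 0 \<le> ?T i \<and> ?T i < \<infinity>}"
    by blast
  then have "hawkes_N \<beta> l0 e z (b + \<epsilon>) = hawkes_Ninf \<beta> l0 e z"
    by (simp add: hawkes_N_def hawkes_Ninf_def)
  then have "\<gamma> * real (hawkes_Ninf \<beta> l0 e z) \<le> real (hawkes_N \<beta> l0 e z (b + \<epsilon>))"
    using mult_right_mono[OF \<open>\<gamma> \<le> 1\<close>, of "real (hawkes_Ninf \<beta> l0 e z)"] by simp
  then have "hawkes_Tgamma \<beta> l0 \<gamma> e z \<le> ennreal (b + \<epsilon>)"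
    unfolding hawkes_Tgamma_def using \<open>0 \<le> b\<close> \<open>0 < \<epsilon>\<close>
    by (intro Inf_lower CollectI exI[of _ "b + \<epsilon>"]) simp
  then show "hawkes_Tgamma \<beta> l0 \<gamma> e z \<le> ennreal b + ennreal \<epsilon>"
    using \<open>0 \<le> b\<close> \<open>0 < \<epsilon>\<close> by simp
qed

lemma hawkes_Tgamma_le_SUP_hawkes_chain_time:
  assumes \<beta>: "0 < \<beta>" and l0: "0 < l0" and e: "\<And>k. 0 < e k" and z: "\<And>k. 0 \<le> z k" and "\<gamma> \<le> 1"
  shows "hawkes_Tgamma \<beta> l0 \<gamma> e z \<le> (SUP k. ennreal (fst (hawkes_chain \<beta> l0 e z k)))"
    (is "_ \<le> ?S")
proof (cases "?S = \<top>")
  case False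
  then obtain b where b: "?S = ennreal b" "0 \<le> b" by (cases ?S) auto
  have "incseq (\<lambda>k. fst (hawkes_chain \<beta> l0 e z k))"
    using \<beta> e by (intro incseq_hawkes_chain_time) (auto intro: less_imp_le)
  from incseqD[OF this, of 0] have time_nonneg: "0 \<le> fst (hawkes_chain \<beta> l0 e z k)" for k
    by simp
  show ?thesis
    unfolding b(1)
  proof (intro hawkes_Tgamma_le \<open>\<gamma> \<le> 1\<close> \<open>0 \<le> b\<close>)
    fix i assume "hawkes_T \<beta> l0 e z i < \<infinity>"
    then have T: "hawkes_T \<beta> l0 e z i = ereal (fst (hawkes_chain \<beta> l0 e z (Suc i)))"
      using hawkes_T_eq_hawkes_chain[where e = e and z = z and i = i, OF \<beta> l0 e z]
      by (simp split: if_splits)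
    have "ennreal (fst (hawkes_chain \<beta> l0 e z (Suc i))) \<le> ennreal b"
      unfolding b(1)[symmetric] by (rule SUP_upper) simp
    then show "hawkes_T \<beta> l0 e z i \<le> ereal b"
      using time_nonneg b(2) by (simp add: T ennreal_le_iff)
  qed
qed (simp only: top_greatest)

section \<open>The expected quantile time\<close>

lemma AE_exponential_density_pos: "AE x in density lborel (exponential_density l). 0 < x"
proof (subst AE_density)
  show "AE x in lborel. 0 < ennreal (exponential_density l x) \<longrightarrow> 0 < x"
    using AE_lborel_singleton[of 0] by eventually_elim (auto simp: exponential_density_def)
qed simp

lemma (in prob_space) nn_integral_hawkes_chain_time_le:
  fixes G :: "real measure" and E Z :: "nat \<Rightarrow> 'a \<Rightarrow> real"
  assumes G: "prob_space G" "sets G = sets borel" "AE z in G. 0 \<le> z" "integrable G (\<lambda>z. z)"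
    and mean: "\<rho> = (\<integral>z. z \<partial>G)" and \<rho>: "0 \<le> \<rho>" "\<rho> < 1" and \<beta>: "0 < \<beta>"
    and indep: "indep_vars (\<lambda>_. borel) (case_sum E Z) UNIV"
    and E: "\<And>k. distr M borel (E k) = density lborel (exponential_density 1)"
    and Z: "\<And>k. distr M borel (Z k) = G"
  shows "(\<integral>\<^sup>+\<omega>. ennreal (fst (hawkes_chain \<beta> l0 (\<lambda>k. E k \<omega>) (\<lambda>k. Z k \<omega>) k)) \<partial>M)
           \<le> ennreal (hawkes_potential \<beta> \<rho> (l0 / \<beta>))"
proof -
  have "(\<integral>\<^sup>+\<omega>. ennreal (fst (hawkes_chain \<beta> l0 (\<lambda>k. E k \<omega>) (\<lambda>k. Z k \<omega>) k)) \<partial>M)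
      \<le> (\<integral>\<^sup>+\<omega>. hawkes_lyapunov \<beta> \<rho>
            (hawkes_chain \<beta> l0 (\<lambda>k. case_sum E Z (Inl k) \<omega>) (\<lambda>k. case_sum E Z (Inr k) \<omega>) k) \<partial>M)"
    by (intro nn_integral_mono) (simp add: hawkes_lyapunov_def)
  also have "\<dots> \<le> hawkes_lyapunov \<beta> \<rho> (0, l0 / \<beta>)"
    using nn_integral_hawkes_step_le[OF \<beta> \<rho> G mean]
    by (intro nn_integral_driven_chain_le[OF indep measurable_hawkes_step _ hawkes_lyapunov_measurable])
      (auto simp: E Z space_pair_measure)
  finally show ?thesis by (simp add: hawkes_lyapunov_def)
qed

lemma (in prob_space) nn_integral_hawkes_Tgamma_le:
  fixes G :: "real measure" and E Z :: "nat \<Rightarrow> 'a \<Rightarrow> real"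
  assumes G: "prob_space G" "sets G = sets borel" "AE z in G. 0 \<le> z" "integrable G (\<lambda>z. z)"
    and mean: "\<rho> = (\<integral>z. z \<partial>G)" and \<rho>: "0 \<le> \<rho>" "\<rho> < 1" and \<beta>: "0 < \<beta>"
    and l0: "0 < l0" and \<gamma>: "\<gamma> \<le> 1"
    and indep: "indep_vars (\<lambda>_. borel) (case_sum E Z) UNIV"
    and E: "\<And>k. distr M borel (E k) = density lborel (exponential_density 1)"
    and Z: "\<And>k. distr M borel (Z k) = G"
  shows "(\<integral>\<^sup>+\<omega>. hawkes_Tgamma \<beta> l0 \<gamma> (\<lambda>k. E k \<omega>) (\<lambda>k. Z k \<omega>) \<partial>M)
           \<le> ennreal (hawkes_potential \<beta> \<rho> (l0 / \<beta>))"
proof -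
  have rv: "case_sum E Z i \<in> borel_measurable M" for i
    using indep unfolding indep_vars_def2 by auto
  then have [measurable]: "E k \<in> borel_measurable M" "Z k \<in> borel_measurable M" for k
    using rv[of "Inl k"] rv[of "Inr k"] by auto
  have "AE \<omega> in M. 0 < E k \<omega>" for k
    using AE_distrD[of "E k" M borel "\<lambda>x. 0 < x"] AE_exponential_density_pos by (simp only: E) simp
  moreover have "AE \<omega> in M. 0 \<le> Z k \<omega>" for k
    using AE_distrD[of "Z k" M borel "\<lambda>x. 0 \<le> x"] G(3) by (simp only: Z) simp
  ultimately have positive: "AE \<omega> in M. (\<forall>k. 0 < E k \<omega>) \<and> (\<forall>k. 0 \<le> Z k \<omega>)"
    by (simp add: AE_all_countable)
  define time where "time k \<omega> = ennreal (fst (hawkes_chain \<beta> l0 (\<lambda>k. E k \<omega>) (\<lambda>k. Z k \<omega>) k))" for k \<omega>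
  have "(\<lambda>\<omega>. hawkes_chain \<beta> l0 (\<lambda>k. E k \<omega>) (\<lambda>k. Z k \<omega>) k) \<in> M \<rightarrow>\<^sub>M borel \<Otimes>\<^sub>M borel" for k
    by (rule measurable_driven_chain[OF measurable_hawkes_step]) (auto simp: space_pair_measure)
  then have time_meas: "time k \<in> borel_measurable M" for k
    unfolding time_def by measurable
  have "(\<integral>\<^sup>+\<omega>. hawkes_Tgamma \<beta> l0 \<gamma> (\<lambda>k. E k \<omega>) (\<lambda>k. Z k \<omega>) \<partial>M) \<le> (\<integral>\<^sup>+\<omega>. (SUP k. time k \<omega>) \<partial>M)"
    using positive by (intro nn_integral_mono_AE, eventually_elim)
      (simp add: time_def hawkes_Tgamma_le_SUP_hawkes_chain_time \<beta> l0 \<gamma>)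
  also have "\<dots> = (SUP k. integral\<^sup>N M (time k))"
  proof (rule nn_integral_monotone_convergence_SUP_AE[OF _ time_meas])
    show "AE \<omega> in M. time k \<omega> \<le> time (Suc k) \<omega>" for k
      using positive
    proof eventually_elim
      case (elim \<omega>)
      then have "incseq (\<lambda>k. fst (hawkes_chain \<beta> l0 (\<lambda>k. E k \<omega>) (\<lambda>k. Z k \<omega>) k))"
        using \<beta> by (intro incseq_hawkes_chain_time) (auto intro: less_imp_le)
      then show ?case unfolding time_def by (intro ennreal_leI incseq_SucD)
    qed
  qed
  also have "\<dots> \<le> ennreal (hawkes_potential \<beta> \<rho> (l0 / \<beta>))"
    unfolding time_def using nn_integral_hawkes_chain_time_le[OF G mean \<rho> \<beta> indep E Z]
    by (intro SUP_least) simp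
  finally show ?thesis .
qed

theorem corollaryA4:
  fixes M :: "'a measure" and G :: "real measure"
    and E Z :: "nat \<Rightarrow> 'a \<Rightarrow> real"
    and \<beta> \<rho>1 \<alpha> :: real
  assumes "prob_space M"
    and "prob_space G" and "sets G = sets borel"
    and "AE z in G. 0 \<le> z"
    and "integrable G (\<lambda>z. z)"
    and "\<rho>1 = (\<integral>z. z \<partial>G)"
    and "0 \<le> \<rho>1" and "\<rho>1 < 1"
    and "\<beta> > 0"
    and "\<alpha> = \<beta> * (1 - \<rho>1)"
    and "prob_space.indep_vars M (\<lambda>_. borel)
           (\<lambda>j. case j of Inl k \<Rightarrow> E k | Inr k \<Rightarrow> Z k) UNIV"
    and "\<And>k. distributed M lborel (E k) (exponential_density 1)"
    and "\<And>k. distr M borel (Z k) = G"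
  shows "\<exists>r :: nat \<Rightarrow> real. r \<longlonglongrightarrow> 0 \<and>
           (\<forall>\<^sub>F n in sequentially.
              (\<integral>\<^sup>+ \<omega>. hawkes_Tgamma \<beta> (\<alpha> * real n) (1 - 1 / real n)
                         (\<lambda>k. E k \<omega>) (\<lambda>k. Z k \<omega>) \<partial>M)
              \<le> ennreal ((ln (real n) + 1 + r n) / \<alpha>))"
proof -
  interpret prob_space M by fact
  have E: "distr M borel (E k) = density lborel (exponential_density 1)" for k
    using distributed_distr_eq_density[OF assms(12)] by (simp add: distr_cong[OF refl sets_lborel])
  have "0 < \<alpha>" using assms(8-10) by simp
  have "(\<integral>\<^sup>+ \<omega>. hawkes_Tgamma \<beta> (\<alpha> * real n) (1 - 1 / real n) (\<lambda>k. E k \<omega>) (\<lambda>k. Z k \<omega>) \<partial>M)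
      \<le> ennreal ((ln (real n) + 1 + 0) / \<alpha>)" if "1 \<le> n" for n
  proof -
    have "lin_log (real n) = ln (real n) + 1"
      using that by (cases "n = 1") (auto simp: lin_log_def)
    then have "hawkes_potential \<beta> \<rho>1 (\<alpha> * real n / \<beta>) = (ln (real n) + 1) / \<alpha>"
      using assms(8-10) by (simp add: hawkes_potential_def)
    moreover have "(\<integral>\<^sup>+ \<omega>. hawkes_Tgamma \<beta> (\<alpha> * real n) (1 - 1 / real n) (\<lambda>k. E k \<omega>) (\<lambda>k. Z k \<omega>) \<partial>M)
        \<le> ennreal (hawkes_potential \<beta> \<rho>1 (\<alpha> * real n / \<beta>))"
      using \<open>0 < \<alpha>\<close> that
      by (intro nn_integral_hawkes_Tgamma_le[OF assms(2-9) _ _ assms(11) E assms(13)]) auto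
    ultimately show ?thesis by simp
  qed
  then show ?thesis
    by (intro exI[of _ "\<lambda>_. 0"] conjI tendsto_const) (auto simp: eventually_sequentially)
qed

end
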